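(* Let $G=(V,E)$ be a $k$-uniform linear hypergraph with an edge correspondence $\sigma$ and weighted lists of colours $(L,\mu)$ assigned to its edges, where every list $L(e)$ is finite. Let $\ell,n>0$ be such that, for all $e\in E$: (i) $\ell/n\ge 3ek$ (here $e$ in $3ek$ denotes Euler's number); (ii) $|L(e)|_\mu\ge\ell$; (iii) $|N_{G,L,\sigma}(e,v,c)|_\mu\le n$ for all $v\in e$ and $c\in L(e)$. Then $G$ has an $(L,\sigma)$-colouring.
   Context: A hypergraph is $k$-uniform if every edge has exactly $k$ vertices, and linear if any two distinct edges share at most one vertex; distinct edges sharing a vertex are adjacent. Colours are positive integers. A weighted list assignment $(L,\mu)$ gives each edge $e$ a list $L(e)\subseteq\mathbb{N}$ and weights $\mu(e)\colon L(e)\to(0,1]$, written $\mu(e,c)$; for $A\subseteq E\times\mathbb{N}$, $|A|_\mu=\sum_{(e,c)\in A}\mu(e,c)$ and $|L(e)|_\mu=\sum_{c\in L(e)}\mu(e,c)$. An edge correspondence $\sigma$ consists of permutations $\sigma_{e,f}$ of $\mathbb{N}$ for all adjacent edges $e,f$ with $\sigma_{e,f}=\sigma_{f,e}^{-1}$; $(e,c)$ blocks $(f,c')$ if $\sigma_{e,f}(c)=c'$. An $(L,\sigma)$-colouring is $\gamma\colon E\to\mathbb{N}$ with $\gamma(e)\in L(e)$ such that $(e,\gamma(e))$ does not block $(f,\gamma(f))$ for all adjacent $e,f$. $N_{G,L,\sigma}(e,v,c)$ is the set of pairs $(f,c')$ with $v\in f$, $f\ne e$, $c'\in L(f)$ and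 $(f,c')$ blocking $(e,c)$. *)

theory Defs
  imports Complex_Main
begin

definition k_uniform :: "nat \<Rightarrow> 'v set \<Rightarrow> 'v set set \<Rightarrow> bool" where
  "k_uniform k V E \<longleftrightarrow> (\<forall>e\<in>E. e \<subseteq> V \<and> finite e \<and> card e = k)"

definition linear_hg :: "'v set set \<Rightarrow> bool" where
  "linear_hg E \<longleftrightarrow> (\<forall>e\<in>E. \<forall>f\<in>E. e \<noteq> f \<longrightarrow> card (e \<inter> f) \<le> 1)"

definition adjacent :: "'v set set \<Rightarrow> 'v set \<Rightarrow> 'v set \<Rightarrow> bool" where
  "adjacent E e f \<longleftrightarrow> e \<in> E \<and> f \<in> E \<and> e \<noteq> f \<and> e \<inter> f \<noteq> {}"

definition colours :: "nat set" where
  "colours = {c. 0 < c}"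

definition edge_correspondence :: "'v set set \<Rightarrow> ('v set \<Rightarrow> 'v set \<Rightarrow> nat \<Rightarrow> nat) \<Rightarrow> bool" where
  "edge_correspondence E \<sigma> \<longleftrightarrow>
     (\<forall>e f. adjacent E e f \<longrightarrow>
        bij_betw (\<sigma> e f) colours colours \<and>
        (\<forall>c\<in>colours. \<sigma> f e (\<sigma> e f c) = c))"

definition weighted_list_assignment ::
  "'v set set \<Rightarrow> ('v set \<Rightarrow> nat set) \<Rightarrow> ('v set \<Rightarrow> nat \<Rightarrow> real) \<Rightarrow> bool" where
  "weighted_list_assignment E L \<mu> \<longleftrightarrow>
     (\<forall>e\<in>E. L e \<subseteq> colours \<and> (\<forall>c\<in>L e. 0 < \<mu> e c \<and> \<mu> e c \<le> 1))"

definition blocks :: "('v set \<Rightarrow> 'v set \<Rightarrow> nat \<Rightarrow> nat) \<Rightarrow> 'v set \<Rightarrow> nat \<Rightarrow> 'v set \<Rightarrow> nat \<Rightarrow> bool" where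
  "blocks \<sigma> e c f c' \<longleftrightarrow> \<sigma> e f c = c'"

definition weight :: "('v set \<Rightarrow> nat \<Rightarrow> real) \<Rightarrow> ('v set \<times> nat) set \<Rightarrow> real" where
  "weight \<mu> A = (\<Sum>(e, c)\<in>A. \<mu> e c)"

definition list_weight :: "('v set \<Rightarrow> nat \<Rightarrow> real) \<Rightarrow> ('v set \<Rightarrow> nat set) \<Rightarrow> 'v set \<Rightarrow> real" where
  "list_weight \<mu> L e = (\<Sum>c\<in>L e. \<mu> e c)"

definition Nbhd :: "'v set set \<Rightarrow> ('v set \<Rightarrow> nat set) \<Rightarrow> ('v set \<Rightarrow> 'v set \<Rightarrow> nat \<Rightarrow> nat)
                    \<Rightarrow> 'v set \<Rightarrow> 'v \<Rightarrow> nat \<Rightarrow> ('v set \<times> nat) set" where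
  "Nbhd E L \<sigma> e v c = {(f, c'). f \<in> E \<and> v \<in> f \<and> f \<noteq> e \<and> c' \<in> L f \<and> blocks \<sigma> f c' e c}"

definition is_colouring :: "'v set set \<Rightarrow> ('v set \<Rightarrow> nat set) \<Rightarrow> ('v set \<Rightarrow> 'v set \<Rightarrow> nat \<Rightarrow> nat)
                            \<Rightarrow> ('v set \<Rightarrow> nat) \<Rightarrow> bool" where
  "is_colouring E L \<sigma> \<gamma> \<longleftrightarrow>
     (\<forall>e\<in>E. \<gamma> e \<in> L e) \<and>
     (\<forall>e f. adjacent E e f \<longrightarrow> \<not> blocks \<sigma> e (\<gamma> e) f (\<gamma> f))"

end

(*
  Colour each edge e independently at random, giving colour c the probability
  p(e,c) = mu(e,c) / |L(e)|_mu <= mu(e,c) / l.  The bad events are the blocking pairs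
  {(e,c),(f,c')} of adjacent edges; such an event has probability p(e,c) p(f,c') and is
  independent of all bad events involving neither e nor f.  A blocking pair through e
  arises from some c in L(e), a common vertex v of e and f, and (f,c') in N(e,v,c), so the
  bad events through e have total probability at most k n / l <= 1/(3e) < 1/8.  Hence the
  bad events sharing an edge with a given one have total probability at most 1/4, and the
  Lovasz Local Lemma with x = 2P yields a colouring avoiding all of them.
*)

theory Submission
  imports Defs "HOL-Library.FuncSet" "HOL-Analysis.Complex_Transcendental"
begin

definition wmeasure :: "('a \<Rightarrow> real) \<Rightarrow> 'a set \<Rightarrow> 'a set \<Rightarrow> real" where
  "wmeasure w \<Omega> X = sum w (\<Omega> \<inter> X)"

definition avoiding :: "('b \<Rightarrow> 'a set) \<Rightarrow> 'b set \<Rightarrow> 'a set" where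
  "avoiding A S = - (\<Union>b\<in>S. A b)"

lemma wmeasure_nonneg: "\<forall>g\<in>\<Omega>. 0 \<le> w g \<Longrightarrow> 0 \<le> wmeasure w \<Omega> X"
  unfolding wmeasure_def by (rule sum_nonneg) auto

lemma wmeasure_mono:
  "finite \<Omega> \<Longrightarrow> \<forall>g\<in>\<Omega>. 0 \<le> w g \<Longrightarrow> X \<subseteq> Y \<Longrightarrow> wmeasure w \<Omega> X \<le> wmeasure w \<Omega> Y"
  unfolding wmeasure_def by (rule sum_mono2) auto

lemma wmeasure_Un_le:
  assumes "finite \<Omega>" "\<forall>g\<in>\<Omega>. 0 \<le> w g"
  shows "wmeasure w \<Omega> (X \<union> Y) \<le> wmeasure w \<Omega> X + wmeasure w \<Omega> Y"
proof -
  have "\<Omega> \<inter> (X \<union> Y) = (\<Omega> \<inter> X) \<union> (\<Omega> \<inter> Y)" by auto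
  moreover have "0 \<le> sum w ((\<Omega> \<inter> X) \<inter> (\<Omega> \<inter> Y))" using assms by (intro sum_nonneg) auto
  ultimately show ?thesis unfolding wmeasure_def using assms(1) by (simp add: sum_Un)
qed

lemma wmeasure_UN_le:
  assumes "finite \<Omega>" "\<forall>g\<in>\<Omega>. 0 \<le> w g" "finite S"
  shows "wmeasure w \<Omega> (\<Union>b\<in>S. Y b) \<le> (\<Sum>b\<in>S. wmeasure w \<Omega> (Y b))"
  using assms(3)
proof induction
  case empty
  then show ?case by (simp add: wmeasure_def)
next
  case (insert b S)
  have "wmeasure w \<Omega> (\<Union>b\<in>insert b S. Y b) \<le> wmeasure w \<Omega> (Y b) + wmeasure w \<Omega> (\<Union>b\<in>S. Y b)"
    using wmeasure_Un_le[OF assms(1,2)] by simp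
  with insert show ?case by simp
qed

lemma wmeasure_Diff:
  assumes "finite \<Omega>"
  shows "wmeasure w \<Omega> (X - Y) = wmeasure w \<Omega> X - wmeasure w \<Omega> (X \<inter> Y)"
proof -
  have "\<Omega> \<inter> (X - Y) = (\<Omega> \<inter> X) - (\<Omega> \<inter> (X \<inter> Y))" by auto
  moreover have "sum w (\<Omega> \<inter> X - \<Omega> \<inter> (X \<inter> Y)) = sum w (\<Omega> \<inter> X) - sum w (\<Omega> \<inter> (X \<inter> Y))"
    using assms by (intro sum_diff) auto
  ultimately show ?thesis by (simp add: wmeasure_def)
qed

lemma avoiding_insert: "avoiding A (insert b S) = avoiding A S - A b"
  by (auto simp: avoiding_def)

lemma wmeasure_avoiding_subset_le:
  assumes "finite \<Omega>" "\<forall>g\<in>\<Omega>. 0 \<le> w g" "finite S" "S' \<subseteq> S"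
  shows "wmeasure w \<Omega> (avoiding A S')
    \<le> wmeasure w \<Omega> (avoiding A S) + (\<Sum>C\<in>S - S'. wmeasure w \<Omega> (A C \<inter> avoiding A S'))"
proof -
  have "avoiding A S' \<subseteq> avoiding A S \<union> (\<Union>C\<in>S - S'. A C \<inter> avoiding A S')"
    using \<open>S' \<subseteq> S\<close> by (auto simp: avoiding_def)
  then have "wmeasure w \<Omega> (avoiding A S')
      \<le> wmeasure w \<Omega> (avoiding A S \<union> (\<Union>C\<in>S - S'. A C \<inter> avoiding A S'))"
    using assms(1,2) by (rule wmeasure_mono[rotated 2])
  also have "\<dots> \<le> wmeasure w \<Omega> (avoiding A S) + (\<Sum>C\<in>S - S'. wmeasure w \<Omega> (A C \<inter> avoiding A S'))"
    using assms(1-3) by (intro order_trans[OF wmeasure_Un_le] add_left_mono wmeasure_UN_le) auto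
  finally show ?thesis .
qed

(* The usual factor \<Prod>(1 - x C) is replaced by its lower bound 1 - \<Sum> x C, so that the
   induction only needs the union bound. *)
lemma lll_conditional_bound:
  fixes A :: "'b \<Rightarrow> 'a set" and P x :: "'b \<Rightarrow> real"
  assumes fin: "finite \<Omega>" and w_nonneg: "\<forall>g\<in>\<Omega>. 0 \<le> w g" and "finite B"
    and indep: "\<And>b S. b \<in> B \<Longrightarrow> S \<subseteq> B \<Longrightarrow> (\<And>C. C \<in> S \<Longrightarrow> \<not> dep C b) \<Longrightarrow>
      wmeasure w \<Omega> (A b \<inter> avoiding A S) \<le> P b * wmeasure w \<Omega> (avoiding A S)"
    and x_nonneg: "\<And>b. b \<in> B \<Longrightarrow> 0 \<le> x b"
    and P_le: "\<And>b. b \<in> B \<Longrightarrow> P b \<le> x b * (1 - (\<Sum>C\<in>{C\<in>B. dep C b}. x C))"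
    and "S \<subseteq> B" "b \<in> B"
  shows "wmeasure w \<Omega> (A b \<inter> avoiding A S) \<le> x b * wmeasure w \<Omega> (avoiding A S)"
proof -
  have "finite S" using \<open>finite B\<close> \<open>S \<subseteq> B\<close> finite_subset by blast
  then show ?thesis using \<open>S \<subseteq> B\<close> \<open>b \<in> B\<close>
  proof (induction S arbitrary: b rule: finite_psubset_induct)
    case (psubset S)
    define \<Gamma> where "\<Gamma> = {C\<in>B. dep C b}"
    define S' where "S' = {C\<in>S. \<not> dep C b}"
    define G where "G = wmeasure w \<Omega> (avoiding A S')"
    have "S' \<subseteq> S" "S - S' \<subseteq> \<Gamma>" "finite \<Gamma>"
      using psubset.prems \<open>finite B\<close> by (auto simp: S'_def \<Gamma>_def)
    have "0 \<le> G" unfolding G_def using w_nonneg by (rule wmeasure_nonneg)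
    have "G \<le> wmeasure w \<Omega> (avoiding A S) + (\<Sum>C\<in>S - S'. wmeasure w \<Omega> (A C \<inter> avoiding A S'))"
      unfolding G_def using fin w_nonneg psubset.hyps \<open>S' \<subseteq> S\<close> by (rule wmeasure_avoiding_subset_le)
    also have "(\<Sum>C\<in>S - S'. wmeasure w \<Omega> (A C \<inter> avoiding A S')) \<le> (\<Sum>C\<in>S - S'. x C * G)"
      unfolding G_def using psubset \<open>S' \<subseteq> S\<close> by (intro sum_mono psubset.IH) (auto simp: S'_def)
    also have "\<dots> = (\<Sum>C\<in>S - S'. x C) * G"
      by (simp add: sum_distrib_right)
    also have "\<dots> \<le> (\<Sum>C\<in>\<Gamma>. x C) * G"
      using \<open>S - S' \<subseteq> \<Gamma>\<close> \<open>finite \<Gamma>\<close> x_nonneg \<open>0 \<le> G\<close>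
      by (intro mult_right_mono sum_mono2) (auto simp: \<Gamma>_def)
    finally have G_le: "(1 - (\<Sum>C\<in>\<Gamma>. x C)) * G \<le> wmeasure w \<Omega> (avoiding A S)"
      by (simp add: algebra_simps)
    have "wmeasure w \<Omega> (A b \<inter> avoiding A S) \<le> wmeasure w \<Omega> (A b \<inter> avoiding A S')"
      using \<open>S' \<subseteq> S\<close> by (intro wmeasure_mono[OF fin w_nonneg]) (auto simp: avoiding_def)
    also have "\<dots> \<le> P b * G"
      unfolding G_def using psubset.prems \<open>S' \<subseteq> S\<close> by (intro indep) (auto simp: S'_def)
    also have "\<dots> \<le> x b * ((1 - (\<Sum>C\<in>\<Gamma>. x C)) * G)"
      using P_le[OF psubset.prems(2)] \<open>0 \<le> G\<close> unfolding \<Gamma>_def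
      by (metis mult.assoc mult_right_mono)
    also have "\<dots> \<le> x b * wmeasure w \<Omega> (avoiding A S)"
      using G_le x_nonneg psubset.prems by (intro mult_left_mono) auto
    finally show ?case .
  qed
qed

lemma lovasz_local_lemma:
  fixes A :: "'b \<Rightarrow> 'a set" and P x :: "'b \<Rightarrow> real"
  assumes fin: "finite \<Omega>" and w_nonneg: "\<forall>g\<in>\<Omega>. 0 \<le> w g" and "finite B"
    and indep: "\<And>b S. b \<in> B \<Longrightarrow> S \<subseteq> B \<Longrightarrow> (\<And>C. C \<in> S \<Longrightarrow> \<not> dep C b) \<Longrightarrow>
      wmeasure w \<Omega> (A b \<inter> avoiding A S) \<le> P b * wmeasure w \<Omega> (avoiding A S)"
    and x_nonneg: "\<And>b. b \<in> B \<Longrightarrow> 0 \<le> x b"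
    and P_le: "\<And>b. b \<in> B \<Longrightarrow> P b \<le> x b * (1 - (\<Sum>C\<in>{C\<in>B. dep C b}. x C))"
    and x_less_1: "\<And>b. b \<in> B \<Longrightarrow> x b < 1"
    and "0 < sum w \<Omega>"
  shows "\<Omega> \<inter> avoiding A B \<noteq> {}"
proof -
  have lower: "(\<Prod>b\<in>S. 1 - x b) * sum w \<Omega> \<le> wmeasure w \<Omega> (avoiding A S)" if "S \<subseteq> B" for S
  proof -
    have "finite S" using \<open>finite B\<close> \<open>S \<subseteq> B\<close> finite_subset by blast
    then show ?thesis using \<open>S \<subseteq> B\<close>
    proof (induction S)
      case empty
      then show ?case by (simp add: wmeasure_def avoiding_def)
    next
      case (insert b S)
      have "wmeasure w \<Omega> (A b \<inter> avoiding A S) \<le> x b * wmeasure w \<Omega> (avoiding A S)"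
        using insert.prems by (intro lll_conditional_bound[OF fin w_nonneg \<open>finite B\<close> indep x_nonneg P_le])
          auto
      then have "(1 - x b) * wmeasure w \<Omega> (avoiding A S) \<le> wmeasure w \<Omega> (avoiding A (insert b S))"
        by (simp add: avoiding_insert wmeasure_Diff[OF fin] Int_commute algebra_simps)
      moreover have "(1 - x b) * ((\<Prod>b\<in>S. 1 - x b) * sum w \<Omega>) \<le> (1 - x b) * wmeasure w \<Omega> (avoiding A S)"
        using insert x_less_1[of b] by (intro mult_left_mono) auto
      ultimately show ?case using insert by (simp add: mult.assoc)
    qed
  qed
  have "0 < (\<Prod>b\<in>B. 1 - x b) * sum w \<Omega>"
    using x_less_1 \<open>0 < sum w \<Omega>\<close> by (simp add: prod_pos)
  then have "0 < wmeasure w \<Omega> (avoiding A B)"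
    using lower[of B] by simp
  then show ?thesis by (auto simp: wmeasure_def)
qed

lemma lovasz_local_lemma_quarter:
  fixes A :: "'b \<Rightarrow> 'a set" and P :: "'b \<Rightarrow> real"
  assumes "finite \<Omega>" and "\<forall>g\<in>\<Omega>. 0 \<le> w g" and "finite B"
    and "\<And>b S. b \<in> B \<Longrightarrow> S \<subseteq> B \<Longrightarrow> (\<And>C. C \<in> S \<Longrightarrow> \<not> dep C b) \<Longrightarrow>
      wmeasure w \<Omega> (A b \<inter> avoiding A S) \<le> P b * wmeasure w \<Omega> (avoiding A S)"
    and P_nonneg: "\<And>b. b \<in> B \<Longrightarrow> 0 \<le> P b"
    and dep_refl: "\<And>b. b \<in> B \<Longrightarrow> dep b b"
    and dep_sum: "\<And>b. b \<in> B \<Longrightarrow> (\<Sum>C\<in>{C\<in>B. dep C b}. P C) \<le> 1/4"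
    and "0 < sum w \<Omega>"
  shows "\<Omega> \<inter> avoiding A B \<noteq> {}"
proof (rule lovasz_local_lemma[where x = "\<lambda>b. 2 * P b"])
  fix b assume "b \<in> B"
  have "(\<Sum>C\<in>{C\<in>B. dep C b}. 2 * P C) \<le> 1/2"
    using dep_sum[OF \<open>b \<in> B\<close>] by (simp add: sum_distrib_left[symmetric])
  then have "P b * 1 \<le> P b * (2 * (1 - (\<Sum>C\<in>{C\<in>B. dep C b}. 2 * P C)))"
    using P_nonneg[OF \<open>b \<in> B\<close>] by (intro mult_left_mono) auto
  then show "P b \<le> 2 * P b * (1 - (\<Sum>C\<in>{C\<in>B. dep C b}. 2 * P C))"
    by (simp only: mult_ac mult_1_right)
  have "P b \<le> (\<Sum>C\<in>{C\<in>B. dep C b}. P C)"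
    using \<open>finite B\<close> \<open>b \<in> B\<close> dep_refl P_nonneg by (intro member_le_sum) auto
  then show "2 * P b < 1"
    using dep_sum[OF \<open>b \<in> B\<close>] by linarith
qed (use assms in auto)

definition cylinder :: "('i \<times> 'c) set \<Rightarrow> ('i \<Rightarrow> 'c) set" where
  "cylinder D = {g. \<forall>(i, c)\<in>D. g i = c}"

definition determined_by :: "('i \<Rightarrow> 'c) set \<Rightarrow> 'i set \<Rightarrow> bool" where
  "determined_by X J \<longleftrightarrow> (\<forall>g g'. (\<forall>j\<in>J. g j = g' j) \<longrightarrow> (g \<in> X \<longleftrightarrow> g' \<in> X))"

lemma determined_by_mono: "determined_by X J \<Longrightarrow> J \<subseteq> J' \<Longrightarrow> determined_by X J'"
  unfolding determined_by_def by blast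

lemma determined_by_Int: "determined_by X J \<Longrightarrow> determined_by Y J \<Longrightarrow> determined_by (X \<inter> Y) J"
  unfolding determined_by_def by blast

lemma determined_by_cylinder: "determined_by (cylinder D) (fst ` D)"
  unfolding determined_by_def cylinder_def by force

lemma determined_by_avoiding:
  "(\<And>b. b \<in> S \<Longrightarrow> determined_by (A b) J) \<Longrightarrow> determined_by (avoiding A S) J"
  unfolding determined_by_def avoiding_def by blast

lemma sum_PiE_insert:
  assumes "i \<notin> I"
  shows "(\<Sum>g\<in>PiE (insert i I) L. f g) = (\<Sum>y\<in>L i. \<Sum>g\<in>PiE I L. f (g(i := y)))"
proof -
  have "(\<Sum>g\<in>PiE (insert i I) L. f g) = (\<Sum>(y, g)\<in>L i \<times> PiE I L. f (g(i := y)))"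
    using assms
    by (intro sum.reindex_bij_witness[of _ "\<lambda>(y, g). g(i := y)" "\<lambda>g. (g i, g(i := undefined))"])
       (auto simp: PiE_def extensional_def)
  then show ?thesis by (simp add: sum.cartesian_product)
qed

lemma wmeasure_PiE_fix_coordinate:
  fixes p :: "'i \<Rightarrow> 'c \<Rightarrow> real" and I :: "'i set"
  defines "w \<equiv> \<lambda>g. \<Prod>j\<in>I. p j (g j)"
  assumes "finite I" "\<forall>j\<in>I. finite (L j)" "i \<in> I" "c \<in> L i" "sum (p i) (L i) = 1"
    and "determined_by X (- {i})"
  shows "wmeasure w (PiE I L) ({g. g i = c} \<inter> X) = p i c * wmeasure w (PiE I L) X"
proof -
  define I' where "I' = I - {i}"
  have I: "I = insert i I'" "i \<notin> I'" "finite I'" using assms(2,4) by (auto simp: I'_def)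
  define W where "W g = (\<Prod>j\<in>I'. p j (g j))" for g
  have split: "wmeasure w (PiE I L) Y
      = (\<Sum>y\<in>L i. p i y * (\<Sum>g\<in>PiE I' L. if g(i := y) \<in> Y then W g else 0))" for Y
  proof -
    have "wmeasure w (PiE I L) Y = (\<Sum>g\<in>PiE I L. if g \<in> Y then w g else 0)"
      unfolding wmeasure_def using assms(2,3) by (intro sum.inter_restrict) (auto intro: finite_PiE)
    also have "\<dots> = (\<Sum>y\<in>L i. \<Sum>g\<in>PiE I' L. if g(i := y) \<in> Y then w (g(i := y)) else 0)"
      unfolding I(1) by (rule sum_PiE_insert[OF I(2)])
    also have "\<dots> = (\<Sum>y\<in>L i. p i y * (\<Sum>g\<in>PiE I' L. if g(i := y) \<in> Y then W g else 0))"
      unfolding sum_distrib_left w_def W_def using I by (intro sum.cong refl) (auto intro!: prod.cong)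
    finally show ?thesis .
  qed
  define F where "F = (\<Sum>g\<in>PiE I' L. if g(i := c) \<in> X then W g else 0)"
  have X_upd: "g(i := y) \<in> X \<longleftrightarrow> g(i := c) \<in> X" for g y
    using \<open>determined_by X (- {i})\<close> unfolding determined_by_def by simp
  have "wmeasure w (PiE I L) X = (\<Sum>y\<in>L i. p i y * F)"
    unfolding split F_def by (subst X_upd) (rule refl)
  also have "\<dots> = F"
    using \<open>sum (p i) (L i) = 1\<close> by (simp add: sum_distrib_right[symmetric])
  finally have X: "wmeasure w (PiE I L) X = F" .
  have "wmeasure w (PiE I L) ({g. g i = c} \<inter> X) = (\<Sum>y\<in>L i. if y = c then p i c * F else 0)"
    unfolding split F_def by (intro sum.cong refl) auto
  also have "\<dots> = p i c * F"
    using assms(3-5) by simp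
  finally show ?thesis using X by simp
qed

lemma wmeasure_PiE_cylinder:
  fixes p :: "'i \<Rightarrow> 'c \<Rightarrow> real" and I :: "'i set"
  defines "w \<equiv> \<lambda>g. \<Prod>j\<in>I. p j (g j)"
  assumes "finite I" "\<forall>j\<in>I. finite (L j)" "\<forall>j\<in>I. sum (p j) (L j) = 1"
    and "finite D" "D \<subseteq> Sigma I L" "inj_on fst D" "determined_by X (- fst ` D)"
  shows "wmeasure w (PiE I L) (cylinder D \<inter> X) = (\<Prod>(i, c)\<in>D. p i c) * wmeasure w (PiE I L) X"
  using assms(5-8)
proof (induction D arbitrary: X)
  case empty
  then show ?case by (simp add: cylinder_def)
next
  case (insert ic D)
  obtain i c where ic: "ic = (i, c)" by fastforce
  have "i \<in> I" "c \<in> L i" using insert.prems(1) ic by auto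
  have "inj_on fst D" "i \<notin> fst ` D" using insert.prems(2) insert.hyps(2) ic by auto
  have "- fst ` insert ic D \<subseteq> - fst ` D" by auto
  then have X_determined: "determined_by X (- fst ` D)"
    using insert.prems(3) by (rule determined_by_mono[rotated])
  have "determined_by (cylinder D \<inter> X) (- {i})"
    using \<open>i \<notin> fst ` D\<close> ic
    by (intro determined_by_Int determined_by_mono[OF determined_by_cylinder]
        determined_by_mono[OF insert.prems(3)]) auto
  have "cylinder (insert ic D) \<inter> X = {g. g i = c} \<inter> (cylinder D \<inter> X)"
    by (auto simp: cylinder_def ic)
  then have "wmeasure w (PiE I L) (cylinder (insert ic D) \<inter> X)
      = p i c * wmeasure w (PiE I L) (cylinder D \<inter> X)"
    unfolding w_def using assms(2-4) \<open>i \<in> I\<close> \<open>c \<in> L i\<close> \<open>determined_by (cylinder D \<inter> X) (- {i})\<close>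
    by (simp add: wmeasure_PiE_fix_coordinate)
  also have "\<dots> = p i c * ((\<Prod>(i, c)\<in>D. p i c) * wmeasure w (PiE I L) X)"
    using insert.prems(1) \<open>inj_on fst D\<close> X_determined by (simp add: insert.IH)
  finally show ?case
    using insert.hyps ic by (simp add: mult.assoc)
qed

definition blocking_pairs ::
  "'v set set \<Rightarrow> ('v set \<Rightarrow> nat set) \<Rightarrow> ('v set \<Rightarrow> 'v set \<Rightarrow> nat \<Rightarrow> nat) \<Rightarrow> ('v set \<times> nat) set set"
  where "blocking_pairs E L \<sigma> =
    {{(e, c), (f, c')} | e f c c'. adjacent E e f \<and> c \<in> L e \<and> c' \<in> L f \<and> blocks \<sigma> e c f c'}"

lemma blocking_pairE:
  assumes "D \<in> blocking_pairs E L \<sigma>"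
  obtains e f c c' where "D = {(e, c), (f, c')}" "e \<in> E" "f \<in> E" "e \<noteq> f" "c \<in> L e" "c' \<in> L f"
  using assms by (auto simp: blocking_pairs_def adjacent_def)

lemma blocking_pairs_subset: "blocking_pairs E L \<sigma> \<subseteq> Pow (Sigma E L)"
  by (auto elim: blocking_pairE)

lemma inj_on_fst_blocking_pair: "D \<in> blocking_pairs E L \<sigma> \<Longrightarrow> inj_on fst D"
  by (auto elim: blocking_pairE)

lemma is_colouring_if_avoiding_blocking_pairs:
  assumes "\<gamma> \<in> PiE E L" and "\<gamma> \<in> avoiding cylinder (blocking_pairs E L \<sigma>)"
  shows "is_colouring E L \<sigma> \<gamma>"
  unfolding is_colouring_def
proof (intro conjI allI impI ballI notI)
  show "\<gamma> e \<in> L e" if "e \<in> E" for e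
    using assms(1) that by auto
  fix e f assume "adjacent E e f" "blocks \<sigma> e (\<gamma> e) f (\<gamma> f)"
  then have "{(e, \<gamma> e), (f, \<gamma> f)} \<in> blocking_pairs E L \<sigma>"
    using assms(1) unfolding blocking_pairs_def adjacent_def by blast
  moreover have "\<gamma> \<in> cylinder {(e, \<gamma> e), (f, \<gamma> f)}"
    by (simp add: cylinder_def)
  ultimately show False
    using assms(2) by (auto simp: avoiding_def)
qed

lemma blocking_pairs_containing_edge:
  assumes "edge_correspondence E \<sigma>" and "\<forall>f\<in>E. L f \<subseteq> colours"
  shows "{D \<in> blocking_pairs E L \<sigma>. e \<in> fst ` D}
    \<subseteq> (\<lambda>(c, v, f, c'). {(e, c), (f, c')}) ` (SIGMA c:L e. SIGMA v:e. Nbhd E L \<sigma> e v c)"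
proof
  fix D assume "D \<in> {D \<in> blocking_pairs E L \<sigma>. e \<in> fst ` D}"
  then obtain a b c c' where D: "D = {(a, c), (b, c')}" "adjacent E a b" "c \<in> L a" "c' \<in> L b"
      "\<sigma> a b c = c'" and "e = a \<or> e = b"
    unfolding blocking_pairs_def blocks_def by auto
  obtain v where "v \<in> a" "v \<in> b" "a \<in> E" "b \<in> E" "a \<noteq> b"
    using \<open>adjacent E a b\<close> unfolding adjacent_def by blast
  have "\<sigma> b a c' = c"
    using assms D unfolding edge_correspondence_def by (metis \<open>a \<in> E\<close> subsetD)
  show "D \<in> (\<lambda>(c, v, f, c'). {(e, c), (f, c')}) ` (SIGMA c:L e. SIGMA v:e. Nbhd E L \<sigma> e v c)"
    using \<open>e = a \<or> e = b\<close>
  proof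
    assume "e = a"
    then have "(c, v, b, c') \<in> (SIGMA c:L e. SIGMA v:e. Nbhd E L \<sigma> e v c)"
      using D \<open>v \<in> a\<close> \<open>v \<in> b\<close> \<open>b \<in> E\<close> \<open>a \<noteq> b\<close> \<open>\<sigma> b a c' = c\<close>
      by (auto simp: Nbhd_def blocks_def)
    then show ?thesis by (rule rev_image_eqI) (simp add: D(1) \<open>e = a\<close>)
  next
    assume "e = b"
    then have "(c', v, a, c) \<in> (SIGMA c:L e. SIGMA v:e. Nbhd E L \<sigma> e v c)"
      using D \<open>v \<in> a\<close> \<open>v \<in> b\<close> \<open>a \<in> E\<close> \<open>a \<noteq> b\<close>
      by (auto simp: Nbhd_def blocks_def)
    then show ?thesis by (rule rev_image_eqI) (simp add: D(1) \<open>e = b\<close> insert_commute)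
  qed
qed

lemma sum_blocking_pairs_containing_edge_le:
  fixes p :: "'v set \<Rightarrow> nat \<Rightarrow> real" and t :: real
  assumes "edge_correspondence E \<sigma>" "\<forall>f\<in>E. L f \<subseteq> colours" "finite E" "\<forall>f\<in>E. finite (L f)"
    and "e \<in> E" "finite e"
    and p_nonneg: "\<forall>f\<in>E. \<forall>c\<in>L f. 0 \<le> p f c" and "sum (p e) (L e) = 1"
    and Nbhd_le: "\<forall>v\<in>e. \<forall>c\<in>L e. (\<Sum>(f, c')\<in>Nbhd E L \<sigma> e v c. p f c') \<le> t"
  shows "(\<Sum>D\<in>{D \<in> blocking_pairs E L \<sigma>. e \<in> fst ` D}. \<Prod>(i, c)\<in>D. p i c) \<le> card e * t"
proof -
  define P where "P D = (\<Prod>(i, c)\<in>D. p i c)" for D :: "('v set \<times> nat) set"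
  define M where "M = (SIGMA c:L e. SIGMA v:e. Nbhd E L \<sigma> e v c)"
  define \<phi> where "\<phi> = (\<lambda>(c::nat, v::'v, f::'v set, c'::nat). {(e, c), (f, c')})"
  have Nbhd_sub: "Nbhd E L \<sigma> e v c \<subseteq> Sigma E L" for v c
    by (auto simp: Nbhd_def)
  have fin_Nbhd: "finite (Nbhd E L \<sigma> e v c)" for v c
    using assms(3,4) by (intro finite_subset[OF Nbhd_sub]) auto
  have "finite M"
    unfolding M_def using assms(4-6) fin_Nbhd by auto
  have P_nonneg: "0 \<le> P D" if "D \<subseteq> Sigma E L" for D
    unfolding P_def using that p_nonneg by (intro prod_nonneg) auto
  have P_\<phi>: "P (\<phi> z) = p e c * p f c'" and \<phi>_sub: "\<phi> z \<subseteq> Sigma E L"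
    if "z \<in> M" "z = (c, v, f, c')" for z c v f c'
  proof -
    have "c \<in> L e" "f \<in> E" "c' \<in> L f" "f \<noteq> e"
      using that by (auto simp: M_def Nbhd_def)
    then show "P (\<phi> z) = p e c * p f c'" "\<phi> z \<subseteq> Sigma E L"
      using \<open>e \<in> E\<close> by (auto simp: P_def \<phi>_def that(2))
  qed
  have "(\<Sum>D\<in>{D \<in> blocking_pairs E L \<sigma>. e \<in> fst ` D}. P D) \<le> sum P (\<phi> ` M)"
    using blocking_pairs_containing_edge[OF assms(1,2)] \<open>finite M\<close> \<phi>_sub
    by (intro sum_mono2) (auto simp: \<phi>_def M_def intro!: P_nonneg)
  also have "\<dots> \<le> (\<Sum>z\<in>M. P (\<phi> z))"
    using sum_image_le[of M P \<phi>] \<open>finite M\<close> \<phi>_sub P_nonneg by (force simp: comp_def)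
  also have "\<dots> = (\<Sum>(c, v, f, c')\<in>M. p e c * p f c')"
    using P_\<phi> by (intro sum.cong) auto
  also have "\<dots> = (\<Sum>c\<in>L e. \<Sum>v\<in>e. \<Sum>(f, c')\<in>Nbhd E L \<sigma> e v c. p e c * p f c')"
    unfolding M_def using assms(4-6) fin_Nbhd by (simp add: sum.Sigma split_def)
  also have "\<dots> = (\<Sum>c\<in>L e. p e c * (\<Sum>v\<in>e. \<Sum>(f, c')\<in>Nbhd E L \<sigma> e v c. p f c'))"
    by (simp add: sum_distrib_left split_def)
  also have "\<dots> \<le> (\<Sum>c\<in>L e. p e c * (card e * t))"
  proof (intro sum_mono mult_left_mono)
    fix c assume "c \<in> L e"
    then show "0 \<le> p e c"
      using p_nonneg \<open>e \<in> E\<close> by blast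
    have "(\<Sum>v\<in>e. \<Sum>(f, c')\<in>Nbhd E L \<sigma> e v c. p f c') \<le> (\<Sum>v\<in>e. t)"
      using Nbhd_le \<open>c \<in> L e\<close> by (intro sum_mono) auto
    then show "(\<Sum>v\<in>e. \<Sum>(f, c')\<in>Nbhd E L \<sigma> e v c. p f c') \<le> card e * t"
      by simp
  qed
  also have "\<dots> = card e * t"
    using \<open>sum (p e) (L e) = 1\<close> by (simp add: sum_distrib_right[symmetric])
  finally show ?thesis unfolding P_def .
qed

lemma sum_blocking_pairs_sharing_edge_le:
  fixes P :: "('v set \<times> nat) set \<Rightarrow> real"
  assumes "D \<in> blocking_pairs E L \<sigma>" "finite (blocking_pairs E L \<sigma>)"
    and "\<forall>C\<in>blocking_pairs E L \<sigma>. 0 \<le> P C"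
    and "\<forall>e\<in>E. (\<Sum>C\<in>{C \<in> blocking_pairs E L \<sigma>. e \<in> fst ` C}. P C) \<le> s"
  shows "(\<Sum>C\<in>{C \<in> blocking_pairs E L \<sigma>. fst ` C \<inter> fst ` D \<noteq> {}}. P C) \<le> 2 * s"
proof -
  let ?B = "blocking_pairs E L \<sigma>"
  obtain e f c c' where D: "D = {(e, c), (f, c')}" "e \<in> E" "f \<in> E"
    using assms(1) by (rule blocking_pairE)
  have "{C \<in> ?B. fst ` C \<inter> fst ` D \<noteq> {}} = ?B \<inter> ({C. e \<in> fst ` C} \<union> {C. f \<in> fst ` C})"
    using D(1) by auto
  then have "(\<Sum>C\<in>{C \<in> ?B. fst ` C \<inter> fst ` D \<noteq> {}}. P C)
      = wmeasure P ?B ({C. e \<in> fst ` C} \<union> {C. f \<in> fst ` C})"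
    by (simp add: wmeasure_def)
  also have "\<dots> \<le> wmeasure P ?B {C. e \<in> fst ` C} + wmeasure P ?B {C. f \<in> fst ` C}"
    using assms(2,3) by (rule wmeasure_Un_le)
  also have "\<dots> \<le> 2 * s"
  proof -
    have "wmeasure P ?B {C. e \<in> fst ` C} \<le> s" "wmeasure P ?B {C. f \<in> fst ` C} \<le> s"
      using assms(4) D(2,3) by (simp_all add: wmeasure_def Int_def)
    then show ?thesis by linarith
  qed
  finally show ?thesis .
qed

lemma is_colouring_exists_if_edge_sums_le:
  fixes p :: "'v set \<Rightarrow> nat \<Rightarrow> real"
  assumes "finite E" "\<forall>e\<in>E. finite (L e)"
    and p_nonneg: "\<forall>e\<in>E. \<forall>c\<in>L e. 0 \<le> p e c" and p_sum: "\<forall>e\<in>E. sum (p e) (L e) = 1"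
    and edge_sums: "\<forall>e\<in>E. (\<Sum>D\<in>{D \<in> blocking_pairs E L \<sigma>. e \<in> fst ` D}. \<Prod>(i, c)\<in>D. p i c) \<le> 1/8"
  shows "\<exists>\<gamma>. is_colouring E L \<sigma> \<gamma>"
proof -
  let ?B = "blocking_pairs E L \<sigma>"
  let ?w = "\<lambda>g. \<Prod>e\<in>E. p e (g e)"
  have fin_B: "finite ?B"
    using assms(1,2) by (intro finite_subset[OF blocking_pairs_subset]) auto
  have P_nonneg: "\<forall>C\<in>?B. 0 \<le> (\<Prod>(i, c)\<in>C. p i c)"
    using blocking_pairs_subset[of E L \<sigma>] p_nonneg by (fastforce intro: prod_nonneg)
  have indep: "wmeasure ?w (PiE E L) (cylinder D \<inter> avoiding cylinder S)
      \<le> (\<Prod>(i, c)\<in>D. p i c) * wmeasure ?w (PiE E L) (avoiding cylinder S)"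
    if "D \<in> ?B" "\<And>C. C \<in> S \<Longrightarrow> \<not> fst ` C \<inter> fst ` D \<noteq> {}" for D S
  proof -
    have "determined_by (avoiding cylinder S) (- fst ` D)"
      using that(2) by (intro determined_by_avoiding determined_by_mono[OF determined_by_cylinder]) auto
    then show ?thesis
      using that(1) assms(1,2) p_sum blocking_pairs_subset inj_on_fst_blocking_pair
      by (subst wmeasure_PiE_cylinder) (auto elim: blocking_pairE)
  qed
  have dep_sums: "(\<Sum>C\<in>{C \<in> ?B. fst ` C \<inter> fst ` D \<noteq> {}}. \<Prod>(i, c)\<in>C. p i c) \<le> 1/4" if "D \<in> ?B" for D
    using sum_blocking_pairs_sharing_edge_le[OF that fin_B P_nonneg edge_sums] by simp
  have "PiE E L \<inter> avoiding cylinder ?B \<noteq> {}"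
  proof (rule lovasz_local_lemma_quarter[where P = "\<lambda>D. \<Prod>(i, c)\<in>D. p i c"
        and dep = "\<lambda>C D. fst ` C \<inter> fst ` D \<noteq> {}"])
    show "finite (PiE E L)"
      using assms(1,2) by (simp add: finite_PiE)
    show "\<forall>g\<in>PiE E L. 0 \<le> ?w g"
      using p_nonneg by (auto intro: prod_nonneg)
    show "0 < sum ?w (PiE E L)"
      using prod_sum_PiE[of E L p, symmetric] assms(1,2) p_sum by simp
  qed (use fin_B indep P_nonneg dep_sums in \<open>auto elim: blocking_pairE\<close>)
  then show ?thesis
    using is_colouring_if_avoiding_blocking_pairs by blast
qed

lemma sum_Nbhd_normalised_weight_le:
  assumes "weighted_list_assignment E L \<mu>" "0 < l" "\<forall>f\<in>E. l \<le> list_weight \<mu> L f"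
    and "weight \<mu> (Nbhd E L \<sigma> e v c) \<le> n"
  shows "(\<Sum>(f, c')\<in>Nbhd E L \<sigma> e v c. \<mu> f c' / list_weight \<mu> L f) \<le> n / l"
proof -
  have "\<mu> f c' / list_weight \<mu> L f \<le> \<mu> f c' / l" if "f \<in> E" "c' \<in> L f" for f c'
    using assms(1-3) that by (intro divide_left_mono) (fastforce simp: weighted_list_assignment_def)+
  then have "(\<Sum>(f, c')\<in>Nbhd E L \<sigma> e v c. \<mu> f c' / list_weight \<mu> L f)
      \<le> (\<Sum>(f, c')\<in>Nbhd E L \<sigma> e v c. \<mu> f c' / l)"
    by (intro sum_mono) (auto simp: Nbhd_def)
  also have "\<dots> \<le> n / l"
    using assms(2,4) by (simp add: weight_def split_def sum_divide_distrib[symmetric] divide_right_mono)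
  finally show ?thesis .
qed

lemma eight_mult_le_if_three_exp_one_mult_le:
  fixes a b :: real
  assumes "3 * exp 1 * a \<le> b" "0 \<le> a"
  shows "8 * a \<le> b"
proof -
  have "8 / 3 \<le> exp (1::real)"
    using e_approx_32 unfolding abs_le_iff by simp
  then have "8 * a \<le> 3 * exp 1 * a"
    using \<open>0 \<le> a\<close> by (intro mult_right_mono) auto
  then show ?thesis
    using assms(1) by linarith
qed

theorem lemma2p1:
  fixes V :: "'v set" and E :: "'v set set" and k :: nat
    and L :: "'v set \<Rightarrow> nat set" and \<mu> :: "'v set \<Rightarrow> nat \<Rightarrow> real"
    and \<sigma> :: "'v set \<Rightarrow> 'v set \<Rightarrow> nat \<Rightarrow> nat" and l n :: real
  assumes "finite V"
    and "k_uniform k V E"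
    and "linear_hg E"
    and "edge_correspondence E \<sigma>"
    and "weighted_list_assignment E L \<mu>"
    and "\<forall>e\<in>E. finite (L e)"
    and "l > 0" and "n > 0"
    and "\<forall>e\<in>E. l / n \<ge> 3 * exp 1 * real k"
    and "\<forall>e\<in>E. list_weight \<mu> L e \<ge> l"
    and "\<forall>e\<in>E. \<forall>v\<in>e. \<forall>c\<in>L e. weight \<mu> (Nbhd E L \<sigma> e v c) \<le> n"
  shows "\<exists>\<gamma>. is_colouring E L \<sigma> \<gamma>"
proof -
  have "finite E"
    using assms(1,2) unfolding k_uniform_def by (meson Pow_iff finite_Pow_iff finite_subset subsetI)
  have colours: "\<forall>e\<in>E. L e \<subseteq> colours"
    using assms(5) by (simp add: weighted_list_assignment_def)
  define p where "p e c = \<mu> e c / list_weight \<mu> L e" for e c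
  have p_nonneg: "\<forall>e\<in>E. \<forall>c\<in>L e. 0 \<le> p e c"
    using assms(5,7,10) by (fastforce simp: p_def weighted_list_assignment_def)
  have p_sum: "\<forall>e\<in>E. sum (p e) (L e) = 1"
    using assms(7,10) by (auto simp: p_def list_weight_def sum_divide_distrib[symmetric])
  have Nbhd_le: "\<forall>e\<in>E. \<forall>v\<in>e. \<forall>c\<in>L e. (\<Sum>(f, c')\<in>Nbhd E L \<sigma> e v c. p f c') \<le> n / l"
    unfolding p_def using assms(5,7,10,11) by (blast intro: sum_Nbhd_normalised_weight_le)
  have "(\<Sum>D\<in>{D \<in> blocking_pairs E L \<sigma>. e \<in> fst ` D}. \<Prod>(i, c)\<in>D. p i c) \<le> 1/8" if "e \<in> E" for e
  proof -
    have "8 * real k \<le> l / n"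
      using assms(9) that by (intro eight_mult_le_if_three_exp_one_mult_le) auto
    then have "card e * (n / l) \<le> 1/8"
      using assms(2,7,8) that by (simp add: k_uniform_def field_simps)
    moreover have "(\<Sum>D\<in>{D \<in> blocking_pairs E L \<sigma>. e \<in> fst ` D}. \<Prod>(i, c)\<in>D. p i c) \<le> card e * (n / l)"
      using assms(2,4,6) \<open>finite E\<close> colours p_nonneg p_sum Nbhd_le that
      by (intro sum_blocking_pairs_containing_edge_le) (auto simp: k_uniform_def)
    ultimately show ?thesis
      by linarith
  qed
  then show ?thesis
    using assms(6) \<open>finite E\<close> p_nonneg p_sum by (intro is_colouring_exists_if_edge_sums_le) auto
qed

end
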